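(* Let $G$ be a finitely generated group with decidable word problem and $S$ a finite generating set of $G$. Then the infinite snake problem for $(G,S)$ is in $\Pi^0_1$.
   Context: The word problem of $G$ with respect to $S$ asks, given a word $w$ over $S\cup S^{-1}$, whether $w$ represents $1_G$. A tileset graph for $(G,S)$ is a finite multigraph $\Gamma=(A,B)$ whose edges are triples $(a,a',s)$ with $a,a'\in A$, $s\in S\cup S^{-1}$, such that $(a,a',s)\in B$ implies $(a',a,s^{-1})\in B$. A bi-infinite $\Gamma$-snake is a pair $(\omega,\zeta)$ with $\omega:\mathbb{Z}\to G$ injective and $\zeta:\mathbb{Z}\to A$ such that $d\omega_i:=\omega(i)^{-1}\omega(i+1)\in S\cup S^{-1}$ and $(\zeta(i),\zeta(i+1),d\omega_i)\in B$ for all $i$. The infinite snake problem for $(G,S)$: given $\Gamma$, decide whether a bi-infinite $\Gamma$-snake exists. *)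

theory Defs
  imports "HOL-Algebra.Generated_Groups" "HOL-Library.Nat_Bijection"
begin

datatype recf =
    Zf
  | Sf
  | Idf nat
  | Cnf recf "recf list"
  | Prf recf recf
  | Mnf recf

inductive reval :: "recf \<Rightarrow> nat list \<Rightarrow> nat \<Rightarrow> bool" where
  zero: "reval Zf xs 0"
| succ: "reval Sf (x # xs) (Suc x)"
| proj: "i < length xs \<Longrightarrow> reval (Idf i) xs (xs ! i)"
| comp: "list_all2 (\<lambda>g y. reval g xs y) gs ys \<Longrightarrow> reval f ys r \<Longrightarrow> reval (Cnf f gs) xs r"
| prim0: "reval f xs r \<Longrightarrow> reval (Prf f g) (0 # xs) r"
| primS: "reval (Prf f g) (n # xs) y \<Longrightarrow> reval g (n # y # xs) r \<Longrightarrow> reval (Prf f g) (Suc n # xs) r"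
| mini: "reval f (n # xs) 0 \<Longrightarrow> (\<forall>m<n. \<exists>y. reval f (m # xs) y \<and> y > 0)
          \<Longrightarrow> reval (Mnf f) xs n"

definition decidable_set :: "nat set \<Rightarrow> bool" where
  "decidable_set A \<longleftrightarrow> (\<exists>f. \<forall>n. reval f [n] (if n \<in> A then 1 else 0))"

definition decidable_rel :: "(nat \<times> nat) set \<Rightarrow> bool" where
  "decidable_rel R \<longleftrightarrow> (\<exists>f. \<forall>n m. reval f [n, m] (if (n, m) \<in> R then 1 else 0))"

definition Pi01 :: "nat set \<Rightarrow> bool" where
  "Pi01 A \<longleftrightarrow> (\<exists>R. decidable_rel R \<and> (\<forall>n. n \<in> A \<longleftrightarrow> (\<forall>m. (n, m) \<in> R)))"

text \<open>The finite generating set S is enumerated by a list gens.  Letters of S \<union> S\<inverse>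
  are coded by naturals l < 2 * length gens: l = 2i stands for gens!i and l = 2i+1
  for its inverse.\<close>

definition letter_ok :: "'g list \<Rightarrow> nat \<Rightarrow> bool" where
  "letter_ok gens l \<longleftrightarrow> l < 2 * length gens"

definition letter_val :: "('g, 'b) monoid_scheme \<Rightarrow> 'g list \<Rightarrow> nat \<Rightarrow> 'g" where
  "letter_val G gens l =
     (if even l then gens ! (l div 2) else inv\<^bsub>G\<^esub> (gens ! (l div 2)))"

definition word_val :: "('g, 'b) monoid_scheme \<Rightarrow> 'g list \<Rightarrow> nat list \<Rightarrow> 'g" where
  "word_val G gens w = foldr (\<lambda>l g. letter_val G gens l \<otimes>\<^bsub>G\<^esub> g) w \<one>\<^bsub>G\<^esub>"

definition word_problem :: "('g, 'b) monoid_scheme \<Rightarrow> 'g list \<Rightarrow> nat set" where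
  "word_problem G gens =
     {c. (\<forall>l \<in> set (list_decode c). letter_ok gens l)
         \<and> word_val G gens (list_decode c) = \<one>\<^bsub>G\<^esub>}"

definition is_tileset_graph ::
    "('g, 'b) monoid_scheme \<Rightarrow> 'g set \<Rightarrow> nat set \<Rightarrow> (nat \<times> nat \<times> 'g) set \<Rightarrow> bool" where
  "is_tileset_graph G S A B \<longleftrightarrow> finite A \<and> finite B \<and>
     (\<forall>(a, a', s) \<in> B. a \<in> A \<and> a' \<in> A \<and> s \<in> S \<union> (\<lambda>x. inv\<^bsub>G\<^esub> x) ` S) \<and>
     (\<forall>(a, a', s) \<in> B. (a', a, inv\<^bsub>G\<^esub> s) \<in> B)"

definition bi_infinite_snake ::
    "('g, 'b) monoid_scheme \<Rightarrow> 'g set \<Rightarrow> nat set \<Rightarrow> (nat \<times> nat \<times> 'g) set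
      \<Rightarrow> (int \<Rightarrow> 'g) \<Rightarrow> (int \<Rightarrow> nat) \<Rightarrow> bool" where
  "bi_infinite_snake G S A B \<omega> \<zeta> \<longleftrightarrow>
     inj \<omega> \<and> (\<forall>i. \<omega> i \<in> carrier G) \<and> (\<forall>i. \<zeta> i \<in> A) \<and>
     (\<forall>i. inv\<^bsub>G\<^esub> (\<omega> i) \<otimes>\<^bsub>G\<^esub> \<omega> (i + 1) \<in> S \<union> (\<lambda>x. inv\<^bsub>G\<^esub> x) ` S \<and>
          (\<zeta> i, \<zeta> (i + 1), inv\<^bsub>G\<^esub> (\<omega> i) \<otimes>\<^bsub>G\<^esub> \<omega> (i + 1)) \<in> B)"

text \<open>Coding of tileset graphs by naturals: c codes the list of vertex counts and edges
  list_decode c = n # es, with A = {0..<n} and each e in es coding an edge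
  prod_decode e = (a, r), prod_decode r = (a', l), l a letter code.\<close>
definition code_vertices :: "nat \<Rightarrow> nat set" where
  "code_vertices c = (case list_decode c of [] \<Rightarrow> {} | n # es \<Rightarrow> {0..<n})"

definition code_edges :: "nat \<Rightarrow> (nat \<times> nat \<times> nat) list" where
  "code_edges c = (case list_decode c of [] \<Rightarrow> []
     | n # es \<Rightarrow> map (\<lambda>e. (fst (prod_decode e), prod_decode (snd (prod_decode e)))) es)"

definition code_graph_edges :: "('g, 'b) monoid_scheme \<Rightarrow> 'g list \<Rightarrow> nat \<Rightarrow> (nat \<times> nat \<times> 'g) set" where
  "code_graph_edges G gens c = (\<lambda>(a, a', l). (a, a', letter_val G gens l)) ` set (code_edges c)"

definition snake_problem :: "('g, 'b) monoid_scheme \<Rightarrow> 'g list \<Rightarrow> nat set" where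
  "snake_problem G gens =
     {c. list_decode c \<noteq> [] \<and> (\<forall>(a, a', l) \<in> set (code_edges c). letter_ok gens l) \<and>
         is_tileset_graph G (set gens) (code_vertices c) (code_graph_edges G gens c) \<and>
         (\<exists>\<omega> \<zeta>. bi_infinite_snake G (set gens) (code_vertices c) (code_graph_edges G gens c) \<omega> \<zeta>)}"

end

theory Submission
  imports Defs "HOL-Library.Countable" "HOL-Library.Infinite_Set"
begin

text \<open>Because the tileset graph is finite, a bi-infinite snake exists as soon as there are
  snakes of every finite length: centre them at the origin and take a pointwise cluster point
  (Koenig's lemma). Conversely a bi-infinite snake contains snakes of every length. A finite
  snake is a path of edges whose label word has no trivial nonempty factor, so with an oracle
  for the word problem the existence of a snake of length \<open>N\<close> in the graph coded by \<open>c\<close> is a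
  decidable relation \<open>R(c, N)\<close>, found by bounded search over edge sequences; the snake
  problem is \<open>{c. \<forall>N. R(c, N)}\<close>. Decidability is witnessed by compiling a small language of
  expressions with primitive recursion and oracle calls into partial recursive functions.\<close>

section \<open>Computability relative to an oracle\<close>

text \<open>In \<open>ORec c b s\<close> the step \<open>s\<close> sees the counter as variable 0, the accumulator as
  variable 1 and the outer variables shifted by 2; it is iterated \<open>c\<close> times starting from \<open>b\<close>.\<close>
datatype oexpr = OVar nat | OConst nat | OAdd oexpr oexpr | OMonus oexpr oexpr
  | OMul oexpr oexpr | ORec oexpr oexpr oexpr | OCall oexpr

primrec oeval :: "(nat \<Rightarrow> nat) \<Rightarrow> oexpr \<Rightarrow> (nat \<Rightarrow> nat) \<Rightarrow> nat" where
  "oeval w (OVar i) \<rho> = \<rho> i"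
| "oeval w (OConst k) \<rho> = k"
| "oeval w (OAdd a b) \<rho> = oeval w a \<rho> + oeval w b \<rho>"
| "oeval w (OMonus a b) \<rho> = oeval w a \<rho> - oeval w b \<rho>"
| "oeval w (OMul a b) \<rho> = oeval w a \<rho> * oeval w b \<rho>"
| "oeval w (ORec c b s) \<rho> =
     rec_nat (oeval w b \<rho>) (\<lambda>i acc. oeval w s (case_nat i (case_nat acc \<rho>))) (oeval w c \<rho>)"
| "oeval w (OCall e) \<rho> = w (oeval w e \<rho>)"

lemma reval_IdfI: "i < length xs \<Longrightarrow> xs ! i = r \<Longrightarrow> reval (Idf i) xs r"
  using reval.proj by blast

lemmas reval_intros = reval.zero reval.succ reval_IdfI reval.comp reval.prim0 reval.primS

primrec recf_const :: "nat \<Rightarrow> recf" where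
  "recf_const 0 = Zf"
| "recf_const (Suc k) = Cnf Sf [recf_const k]"

definition recf_add :: recf where "recf_add = Prf (Idf 0) (Cnf Sf [Idf 1])"
definition recf_mul :: recf where "recf_mul = Prf Zf (Cnf recf_add [Idf 1, Idf 2])"
definition recf_pred :: recf where "recf_pred = Prf Zf (Idf 0)"
definition recf_monus :: recf where "recf_monus = Prf (Idf 0) (Cnf recf_pred [Idf 1])"

lemma reval_recf_const: "reval (recf_const k) xs k"
  by (induction k) (auto intro: reval_intros)

lemma reval_recf_add: "reval recf_add [a, b] (a + b)"
proof (induction a)
  case (Suc a)
  have "reval (Cnf Sf [Idf 1]) [a, a + b, b] (Suc (a + b))"
    by (rule reval.comp[where ys="[a + b]"]) (auto intro!: reval_intros)
  with Suc show ?case unfolding recf_add_def by (auto intro: reval_intros)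
qed (auto simp: recf_add_def intro!: reval_intros)

lemma reval_recf_mul: "reval recf_mul [a, b] (a * b)"
proof (induction a)
  case (Suc a)
  have "reval (Cnf recf_add [Idf 1, Idf 2]) [a, a * b, b] (a * b + b)"
    by (rule reval.comp[where ys="[a * b, b]"]) (auto intro!: reval_intros reval_recf_add)
  with Suc show ?case unfolding recf_mul_def by (auto intro: reval_intros simp: add.commute)
qed (auto simp: recf_mul_def intro!: reval_intros)

lemma reval_recf_pred: "reval recf_pred [a] (a - 1)"
proof (induction a)
  case (Suc a)
  show ?case unfolding recf_pred_def
    by (rule reval.primS[OF Suc[unfolded recf_pred_def]]) (auto intro: reval_intros)
qed (auto simp: recf_pred_def intro!: reval_intros)

lemma reval_recf_monus: "reval recf_monus [b, a] (a - b)"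
proof (induction b)
  case (Suc b)
  have "reval (Cnf recf_pred [Idf 1]) [b, a - b, a] (a - Suc b)"
    by (rule reval.comp[where ys="[a - b]"])
      (use reval_recf_pred[of "a - b"] in \<open>auto intro!: reval_intros\<close>)
  with Suc show ?case unfolding recf_monus_def by (auto intro: reval_intros)
qed (auto simp: recf_monus_def intro!: reval_intros)

primrec compile :: "recf \<Rightarrow> oexpr \<Rightarrow> nat \<Rightarrow> recf" where
  "compile fw (OVar i) n = (if i < n then Idf i else Zf)"
| "compile fw (OConst k) n = recf_const k"
| "compile fw (OAdd a b) n = Cnf recf_add [compile fw a n, compile fw b n]"
| "compile fw (OMonus a b) n = Cnf recf_monus [compile fw b n, compile fw a n]"
| "compile fw (OMul a b) n = Cnf recf_mul [compile fw a n, compile fw b n]"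
| "compile fw (ORec c b s) n =
     Cnf (Prf (compile fw b n) (compile fw s (Suc (Suc n)))) (compile fw c n # map Idf [0..<n])"
| "compile fw (OCall e) n = Cnf fw [compile fw e n]"

definition env_of_list :: "nat list \<Rightarrow> nat \<Rightarrow> nat" where
  "env_of_list xs i = (if i < length xs then xs ! i else 0)"

lemma env_of_list_Cons2: "env_of_list (i # a # xs) = case_nat i (case_nat a (env_of_list xs))"
  by (auto simp: env_of_list_def fun_eq_iff split: nat.split)

lemma reval_map_Idf: "list_all2 (\<lambda>g y. reval g xs y) (map Idf [0..<length xs]) xs"
  by (auto simp: list_all2_conv_all_nth intro: reval_intros)

lemma reval_compile:
  assumes fw: "\<And>m. reval fw [m] (w m)" and n: "length xs = n"
  shows "reval (compile fw e n) xs (oeval w e (env_of_list xs))"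
  using n
proof (induction e arbitrary: n xs)
  case (OVar i) then show ?case by (auto simp: env_of_list_def intro: reval_intros)
next
  case (OConst k) then show ?case by (simp add: reval_recf_const)
next
  case (OAdd a b) then show ?case
    by (auto intro!: reval.comp[where ys="[oeval w a (env_of_list xs), oeval w b (env_of_list xs)]"]
        reval_recf_add)
next
  case (OMonus a b) then show ?case
    by (auto intro!: reval.comp[where ys="[oeval w b (env_of_list xs), oeval w a (env_of_list xs)]"]
        reval_recf_monus)
next
  case (OMul a b) then show ?case
    by (auto intro!: reval.comp[where ys="[oeval w a (env_of_list xs), oeval w b (env_of_list xs)]"]
        reval_recf_mul)
next
  case (OCall e) then show ?case
    by (auto intro!: reval.comp[where ys="[oeval w e (env_of_list xs)]"] fw)
next
  case (ORec c b s)
  let ?r = "rec_nat (oeval w b (env_of_list xs))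
              (\<lambda>i acc. oeval w s (case_nat i (case_nat acc (env_of_list xs))))"
  have rec: "reval (Prf (compile fw b n) (compile fw s (Suc (Suc n)))) (k # xs) (?r k)" for k
  proof (induction k)
    case 0 then show ?case using ORec by (auto intro: reval_intros)
  next
    case (Suc k)
    have "reval (compile fw s (Suc (Suc n))) (k # ?r k # xs) (oeval w s (env_of_list (k # ?r k # xs)))"
      by (rule ORec.IH(3)) (use ORec.prems in simp)
    with Suc show ?case by (auto simp: env_of_list_Cons2 intro: reval_intros)
  qed
  show ?case unfolding compile.simps oeval.simps
    by (rule reval.comp[OF _ rec[of "oeval w c (env_of_list xs)"]])
      (use ORec reval_map_Idf[of xs] in auto)
qed

primrec oexpr_rename :: "(nat \<Rightarrow> nat) \<Rightarrow> oexpr \<Rightarrow> oexpr" where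
  "oexpr_rename f (OVar i) = OVar (f i)"
| "oexpr_rename f (OConst k) = OConst k"
| "oexpr_rename f (OAdd a b) = OAdd (oexpr_rename f a) (oexpr_rename f b)"
| "oexpr_rename f (OMonus a b) = OMonus (oexpr_rename f a) (oexpr_rename f b)"
| "oexpr_rename f (OMul a b) = OMul (oexpr_rename f a) (oexpr_rename f b)"
| "oexpr_rename f (ORec c b s) = ORec (oexpr_rename f c) (oexpr_rename f b)
     (oexpr_rename (case_nat 0 (case_nat 1 (\<lambda>j. Suc (Suc (f j))))) s)"
| "oexpr_rename f (OCall e) = OCall (oexpr_rename f e)"

lemma oeval_rename: "oeval w (oexpr_rename f e) \<rho> = oeval w e (\<rho> \<circ> f)"
proof (induction e arbitrary: f \<rho>)
  case (ORec c b s)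
  have "case_nat i (case_nat acc \<rho>) \<circ> case_nat 0 (case_nat 1 (\<lambda>j. Suc (Suc (f j))))
      = case_nat i (case_nat acc (\<rho> \<circ> f))" for i acc
    by (auto simp: fun_eq_iff split: nat.split)
  then show ?case by (simp only: oexpr_rename.simps oeval.simps ORec.IH)
qed auto

primrec oexpr_subst :: "oexpr \<Rightarrow> (nat \<Rightarrow> oexpr) \<Rightarrow> oexpr" where
  "oexpr_subst (OVar i) \<sigma> = \<sigma> i"
| "oexpr_subst (OConst k) \<sigma> = OConst k"
| "oexpr_subst (OAdd a b) \<sigma> = OAdd (oexpr_subst a \<sigma>) (oexpr_subst b \<sigma>)"
| "oexpr_subst (OMonus a b) \<sigma> = OMonus (oexpr_subst a \<sigma>) (oexpr_subst b \<sigma>)"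
| "oexpr_subst (OMul a b) \<sigma> = OMul (oexpr_subst a \<sigma>) (oexpr_subst b \<sigma>)"
| "oexpr_subst (ORec c b s) \<sigma> = ORec (oexpr_subst c \<sigma>) (oexpr_subst b \<sigma>)
     (oexpr_subst s (case_nat (OVar 0) (case_nat (OVar 1) (\<lambda>j. oexpr_rename (\<lambda>x. Suc (Suc x)) (\<sigma> j)))))"
| "oexpr_subst (OCall e) \<sigma> = OCall (oexpr_subst e \<sigma>)"

lemma oeval_subst: "oeval w (oexpr_subst e \<sigma>) \<rho> = oeval w e (\<lambda>j. oeval w (\<sigma> j) \<rho>)"
proof (induction e arbitrary: \<sigma> \<rho>)
  case (ORec c b s)
  have "(\<lambda>j. oeval w (case_nat (OVar 0) (case_nat (OVar 1)
            (\<lambda>j. oexpr_rename (\<lambda>x. Suc (Suc x)) (\<sigma> j))) j) (case_nat i (case_nat acc \<rho>)))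
      = case_nat i (case_nat acc (\<lambda>j. oeval w (\<sigma> j) \<rho>))" for i acc
    by (auto simp: fun_eq_iff oeval_rename o_def split: nat.split)
  then show ?case by (simp only: oexpr_subst.simps oeval.simps ORec.IH)
qed auto

definition computable_in :: "(nat \<Rightarrow> nat) \<Rightarrow> ((nat \<Rightarrow> nat) \<Rightarrow> nat) \<Rightarrow> bool" where
  "computable_in w F \<longleftrightarrow> (\<exists>e. \<forall>\<rho>. oeval w e \<rho> = F \<rho>)"

definition decidable_in :: "(nat \<Rightarrow> nat) \<Rightarrow> ((nat \<Rightarrow> nat) \<Rightarrow> bool) \<Rightarrow> bool" where
  "decidable_in w P \<longleftrightarrow> computable_in w (\<lambda>\<rho>. if P \<rho> then 1 else 0)"

lemma decidable_rel_if_decidable_in: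
  assumes "\<And>m. reval fw [m] (w m)" and "decidable_in w (\<lambda>\<rho>. (\<rho> 0, \<rho> 1) \<in> R)"
  shows "decidable_rel R"
proof -
  obtain e where e: "\<And>\<rho>. oeval w e \<rho> = (if (\<rho> 0, \<rho> 1) \<in> R then 1 else 0)"
    using assms(2) unfolding decidable_in_def computable_in_def by blast
  have "reval (compile fw e 2) [n, m] (if (n, m) \<in> R then 1 else 0)" for n m
    using reval_compile[OF assms(1), of "[n, m]" 2 e] e[of "env_of_list [n, m]"]
    by (simp add: env_of_list_def)
  then show ?thesis unfolding decidable_rel_def by blast
qed

lemma computable_in_cong: "computable_in w F \<Longrightarrow> (\<And>\<rho>. F \<rho> = F' \<rho>) \<Longrightarrow> computable_in w F'"
  unfolding computable_in_def by metis

lemma computable_var: "computable_in w (\<lambda>\<rho>. \<rho> i)"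
  unfolding computable_in_def by (rule exI[of _ "OVar i"]) simp

lemma computable_const: "computable_in w (\<lambda>\<rho>. k)"
  unfolding computable_in_def by (rule exI[of _ "OConst k"]) simp

lemma computable_add: "computable_in w A \<Longrightarrow> computable_in w B \<Longrightarrow> computable_in w (\<lambda>\<rho>. A \<rho> + B \<rho>)"
  unfolding computable_in_def by (metis oeval.simps(3))

lemma computable_diff: "computable_in w A \<Longrightarrow> computable_in w B \<Longrightarrow> computable_in w (\<lambda>\<rho>. A \<rho> - B \<rho>)"
  unfolding computable_in_def by (metis oeval.simps(4))

lemma computable_mult: "computable_in w A \<Longrightarrow> computable_in w B \<Longrightarrow> computable_in w (\<lambda>\<rho>. A \<rho> * B \<rho>)"
  unfolding computable_in_def by (metis oeval.simps(5))

lemma computable_oracle: "computable_in w A \<Longrightarrow> computable_in w (\<lambda>\<rho>. w (A \<rho>))"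
  unfolding computable_in_def by (metis oeval.simps(7))

lemma computable_Suc: "computable_in w A \<Longrightarrow> computable_in w (\<lambda>\<rho>. Suc (A \<rho>))"
  using computable_add[OF _ computable_const, of w A 1] by simp

lemma computable_rec_nat:
  assumes "computable_in w C" "computable_in w B"
    and "computable_in w (\<lambda>\<rho>. S (\<rho> 0) (\<rho> 1) (\<lambda>j. \<rho> (Suc (Suc j))))"
  shows "computable_in w (\<lambda>\<rho>. rec_nat (B \<rho>) (\<lambda>i acc. S i acc \<rho>) (C \<rho>))"
proof -
  obtain ec eb es where "\<And>\<rho>. oeval w ec \<rho> = C \<rho>" "\<And>\<rho>. oeval w eb \<rho> = B \<rho>"
    "\<And>\<rho>. oeval w es \<rho> = S (\<rho> 0) (\<rho> 1) (\<lambda>j. \<rho> (Suc (Suc j)))"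
    using assms unfolding computable_in_def by metis
  then have "oeval w (ORec ec eb es) \<rho> = rec_nat (B \<rho>) (\<lambda>i acc. S i acc \<rho>) (C \<rho>)" for \<rho>
    by simp
  then show ?thesis unfolding computable_in_def by blast
qed

lemma computable_subst:
  assumes "computable_in w F" "\<And>j. computable_in w (G j)"
  shows "computable_in w (\<lambda>\<rho>. F (\<lambda>j. G j \<rho>))"
proof -
  obtain e where e: "\<And>\<rho>. oeval w e \<rho> = F \<rho>"
    using assms(1) unfolding computable_in_def by blast
  obtain \<sigma> where \<sigma>: "\<And>j \<rho>. oeval w (\<sigma> j) \<rho> = G j \<rho>"
    using assms(2) unfolding computable_in_def by metis
  have "oeval w (oexpr_subst e \<sigma>) \<rho> = F (\<lambda>j. G j \<rho>)" for \<rho>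
    by (simp add: oeval_subst \<sigma> e)
  then show ?thesis unfolding computable_in_def by blast
qed

lemma computable_comp1:
  "computable_in w (\<lambda>\<rho>. f (\<rho> 0)) \<Longrightarrow> computable_in w A \<Longrightarrow> computable_in w (\<lambda>\<rho>. f (A \<rho>))"
  using computable_subst[of w "\<lambda>\<rho>. f (\<rho> 0)" "\<lambda>j. A"] by simp

lemma computable_comp2:
  "computable_in w (\<lambda>\<rho>. f (\<rho> 0) (\<rho> 1)) \<Longrightarrow> computable_in w A \<Longrightarrow> computable_in w B \<Longrightarrow>
    computable_in w (\<lambda>\<rho>. f (A \<rho>) (B \<rho>))"
  using computable_subst[of w "\<lambda>\<rho>. f (\<rho> 0) (\<rho> 1)" "\<lambda>j. if j = 0 then A else B"] by simp

lemma computable_rename: "computable_in w F \<Longrightarrow> computable_in w (\<lambda>\<rho>. F (\<lambda>j. \<rho> (h j)))"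
  using computable_subst[of w F "\<lambda>j \<rho>. \<rho> (h j)"] computable_var by blast

lemma computable_sum_lessThan:
  assumes "computable_in w C" "computable_in w (\<lambda>\<rho>. H (\<rho> 0) (\<lambda>j. \<rho> (Suc j)))"
  shows "computable_in w (\<lambda>\<rho>. \<Sum>i<C \<rho>. H i \<rho>)"
proof -
  have "computable_in w (\<lambda>\<rho>. H (\<rho> 0) (\<lambda>j. \<rho> (Suc (Suc j))))"
    using computable_rename[OF assms(2), of "case_nat 0 (\<lambda>j. Suc (Suc j))"] by simp
  then have "computable_in w (\<lambda>\<rho>. \<rho> 1 + H (\<rho> 0) (\<lambda>j. \<rho> (Suc (Suc j))))"
    by (intro computable_add computable_var)
  from computable_rec_nat[OF assms(1) computable_const[of w 0] this]
  have "computable_in w (\<lambda>\<rho>. rec_nat 0 (\<lambda>i acc. acc + H i \<rho>) (C \<rho>))" by simp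
  moreover have "rec_nat 0 (\<lambda>i acc. acc + H i \<rho>) n = (\<Sum>i<n. H i \<rho>)" for n \<rho>
    by (induction n) auto
  ultimately show ?thesis by (rule computable_in_cong)
qed

lemma computable_if_decidable:
  "decidable_in w P \<Longrightarrow> computable_in w (\<lambda>\<rho>. if P \<rho> then 1 else 0)"
  unfolding decidable_in_def .

lemma computable_if:
  assumes "decidable_in w P" "computable_in w A" "computable_in w B"
  shows "computable_in w (\<lambda>\<rho>. if P \<rho> then A \<rho> else B \<rho>)"
proof -
  have "computable_in w (\<lambda>\<rho>. (if P \<rho> then 1 else 0) * A \<rho> + (1 - (if P \<rho> then 1 else 0)) * B \<rho>)"
    using assms unfolding decidable_in_def by (intro computable_add computable_mult computable_diff computable_const)
  then show ?thesis by (rule computable_in_cong) auto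
qed

lemma decidable_in_cong: "decidable_in w P \<Longrightarrow> (\<And>\<rho>. P \<rho> = Q \<rho>) \<Longrightarrow> decidable_in w Q"
  unfolding decidable_in_def by (auto elim: computable_in_cong)

lemma decidable_inI:
  "computable_in w F \<Longrightarrow> (\<And>\<rho>. F \<rho> = (if P \<rho> then 1 else 0)) \<Longrightarrow> decidable_in w P"
  unfolding decidable_in_def by (rule computable_in_cong)

lemma decidable_less:
  assumes "computable_in w A" "computable_in w B"
  shows "decidable_in w (\<lambda>\<rho>. A \<rho> < B \<rho>)"
proof (rule decidable_inI)
  show "computable_in w (\<lambda>\<rho>. 1 - (1 - (B \<rho> - A \<rho>)))"
    using assms by (intro computable_diff computable_const)
qed auto

lemma decidable_eq:
  assumes "computable_in w A" "computable_in w B"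
  shows "decidable_in w (\<lambda>\<rho>. A \<rho> = B \<rho>)"
proof (rule decidable_inI)
  show "computable_in w (\<lambda>\<rho>. 1 - ((A \<rho> - B \<rho>) + (B \<rho> - A \<rho>)))"
    using assms by (intro computable_diff computable_add computable_const)
qed auto

lemma decidable_not: "decidable_in w P \<Longrightarrow> decidable_in w (\<lambda>\<rho>. \<not> P \<rho>)"
  unfolding decidable_in_def
  by (rule computable_in_cong[OF computable_diff[OF computable_const]]) auto

lemma decidable_conj:
  assumes "decidable_in w P" "decidable_in w Q"
  shows "decidable_in w (\<lambda>\<rho>. P \<rho> \<and> Q \<rho>)"
proof (rule decidable_inI)
  show "computable_in w (\<lambda>\<rho>. (if P \<rho> then 1 else 0) * (if Q \<rho> then 1 else 0))"
    using assms unfolding decidable_in_def by (rule computable_mult)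
qed auto

lemma decidable_disj: "decidable_in w P \<Longrightarrow> decidable_in w Q \<Longrightarrow> decidable_in w (\<lambda>\<rho>. P \<rho> \<or> Q \<rho>)"
  using decidable_not[of w "\<lambda>\<rho>. \<not> P \<rho> \<and> \<not> Q \<rho>"] decidable_conj[OF decidable_not decidable_not] by auto

lemma decidable_imp: "decidable_in w P \<Longrightarrow> decidable_in w Q \<Longrightarrow> decidable_in w (\<lambda>\<rho>. P \<rho> \<longrightarrow> Q \<rho>)"
  using decidable_disj[OF decidable_not, of w P Q] by simp

lemma decidable_all_less:
  assumes "computable_in w C" "decidable_in w (\<lambda>\<rho>. P (\<rho> 0) (\<lambda>j. \<rho> (Suc j)))"
  shows "decidable_in w (\<lambda>\<rho>. \<forall>i<C \<rho>. P i \<rho>)"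
proof -
  have step: "computable_in w (\<lambda>\<rho>. if \<not> P (\<rho> 0) (\<lambda>j. \<rho> (Suc j)) then 1 else 0)"
    by (intro computable_if_decidable decidable_not assms(2))
  have "computable_in w (\<lambda>\<rho>. \<Sum>i<C \<rho>. if \<not> P i \<rho> then 1 else 0)"
    by (rule computable_sum_lessThan[OF assms(1) step])
  from decidable_eq[OF this computable_const]
  have "decidable_in w (\<lambda>\<rho>. (\<Sum>i<C \<rho>. if \<not> P i \<rho> then 1 else 0) = (0::nat))" .
  then show ?thesis by (rule decidable_in_cong) (auto simp: sum_eq_0_iff)
qed

lemma decidable_ex_less:
  assumes "computable_in w C" "decidable_in w (\<lambda>\<rho>. P (\<rho> 0) (\<lambda>j. \<rho> (Suc j)))"
  shows "decidable_in w (\<lambda>\<rho>. \<exists>i<C \<rho>. P i \<rho>)"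
  using decidable_not[OF decidable_all_less[OF assms(1) decidable_not[OF assms(2)]]] by simp

lemmas computable_intros = computable_var computable_const computable_add computable_diff
  computable_mult computable_oracle computable_Suc computable_if computable_if_decidable
  computable_sum_lessThan decidable_less decidable_eq decidable_not
  decidable_conj decidable_disj decidable_imp decidable_all_less decidable_ex_less

lemma triangle_rec_nat: "triangle n = rec_nat 0 (\<lambda>i acc. acc + Suc i) n"
  by (induction n) auto

lemma computable_triangle:
  assumes "computable_in w A"
  shows "computable_in w (\<lambda>\<rho>. triangle (A \<rho>))"
proof (rule computable_comp1[OF _ assms])
  have "computable_in w (\<lambda>\<rho>. rec_nat 0 (\<lambda>i acc. acc + Suc i) (\<rho> 0))"
    by (rule computable_rec_nat[where S="\<lambda>i acc \<rho>. acc + Suc i", OF computable_var computable_const])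
      (intro computable_intros)
  then show "computable_in w (\<lambda>\<rho>. triangle (\<rho> 0))"
    by (rule computable_in_cong) (simp add: triangle_rec_nat)
qed

lemma computable_prod_encode:
  assumes "computable_in w A" "computable_in w B"
  shows "computable_in w (\<lambda>\<rho>. prod_encode (A \<rho>, B \<rho>))"
proof (rule computable_comp2[OF _ assms])
  have "computable_in w (\<lambda>\<rho>. triangle (\<rho> 0 + \<rho> 1) + \<rho> 0)"
    by (intro computable_intros computable_triangle)
  then show "computable_in w (\<lambda>\<rho>. prod_encode (\<rho> 0, \<rho> 1))"
    by (rule computable_in_cong) (simp add: prod_encode_def)
qed

lemma prod_decode_le: "prod_decode n = (a, b) \<Longrightarrow> a \<le> n \<and> b \<le> n"
  by (metis le_prod_encode_1 le_prod_encode_2 prod_decode_inverse)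

lemma prod_decode_by_search:
  "h (fst (prod_decode n)) (snd (prod_decode n))
     = (\<Sum>x<Suc n. \<Sum>y<Suc n. if prod_encode (x, y) = n then h x y else 0)"
proof -
  obtain a b where ab: "prod_decode n = (a, b)" by fastforce
  then have "a < Suc n" "b < Suc n" using prod_decode_le[OF ab] by auto
  have "prod_encode (x, y) = n \<longleftrightarrow> x = a \<and> y = b" for x y
    using ab by (metis prod_decode_inverse prod_encode_inverse prod.inject)
  then have "(\<Sum>x<Suc n. \<Sum>y<Suc n. if prod_encode (x, y) = n then h x y else 0)
      = (\<Sum>x<Suc n. if x = a then (\<Sum>y<Suc n. if y = b then h x y else 0) else 0)"
    by (intro sum.cong refl) auto
  also have "\<dots> = h a b" using \<open>a < Suc n\<close> \<open>b < Suc n\<close> by simp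
  finally show ?thesis by (simp add: ab)
qed

lemma computable_fst_prod_decode:
  assumes "computable_in w A"
  shows "computable_in w (\<lambda>\<rho>. fst (prod_decode (A \<rho>)))"
proof (rule computable_comp1[OF _ assms])
  have "computable_in w (\<lambda>\<rho>. \<Sum>x<Suc (\<rho> 0). \<Sum>y<Suc (\<rho> 0). if prod_encode (x, y) = \<rho> 0 then x else 0)"
    by (intro computable_intros computable_prod_encode)
  then show "computable_in w (\<lambda>\<rho>. fst (prod_decode (\<rho> 0)))"
    by (rule computable_in_cong) (simp only: prod_decode_by_search[of "\<lambda>x y. x"])
qed

lemma computable_snd_prod_decode:
  assumes "computable_in w A"
  shows "computable_in w (\<lambda>\<rho>. snd (prod_decode (A \<rho>)))"
proof (rule computable_comp1[OF _ assms])
  have "computable_in w (\<lambda>\<rho>. \<Sum>x<Suc (\<rho> 0). \<Sum>y<Suc (\<rho> 0). if prod_encode (x, y) = \<rho> 0 then y else 0)"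
    by (intro computable_intros computable_prod_encode)
  then show "computable_in w (\<lambda>\<rho>. snd (prod_decode (\<rho> 0)))"
    by (rule computable_in_cong) (simp only: prod_decode_by_search[of "\<lambda>x y. y"])
qed

definition code_tl :: "nat \<Rightarrow> nat" where
  "code_tl c = snd (prod_decode (c - 1))"

definition code_nth :: "nat \<Rightarrow> nat \<Rightarrow> nat" where
  "code_nth c i = fst (prod_decode ((code_tl ^^ i) c - 1))"

lemma list_decode_code_tl: "list_decode (code_tl c) = tl (list_decode c)"
proof (cases c)
  case 0
  have "prod_decode 0 = (0, 0)" by (simp add: prod_decode_def prod_decode_aux.simps)
  then show ?thesis by (simp add: 0 code_tl_def)
qed (auto simp: code_tl_def split: prod.split)

lemma list_decode_code_tl_pow: "list_decode ((code_tl ^^ i) c) = drop i (list_decode c)"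
  by (induction i) (auto simp: list_decode_code_tl drop_Suc tl_drop)

lemma list_decode_eq_Nil_iff: "list_decode c = [] \<longleftrightarrow> c = 0"
  by (metis list_decode.simps(1) list_decode_inverse list_encode.simps(1))

lemma code_tl_pow_eq_0_iff: "(code_tl ^^ i) c = 0 \<longleftrightarrow> length (list_decode c) \<le> i"
  by (metis drop_eq_Nil list_decode_eq_Nil_iff list_decode_code_tl_pow)

lemma code_nth_eq_nth: "i < length (list_decode c) \<Longrightarrow> code_nth c i = list_decode c ! i"
proof -
  assume i: "i < length (list_decode c)"
  then obtain c' where c': "(code_tl ^^ i) c = Suc c'"
    using code_tl_pow_eq_0_iff by (metis not0_implies_Suc not_le)
  have "list_decode c ! i = hd (list_decode ((code_tl ^^ i) c))"
    using i by (simp add: list_decode_code_tl_pow hd_drop_conv_nth)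
  then show ?thesis by (simp add: c' code_nth_def split: prod.split)
qed

lemma length_list_decode_le: "length (list_decode c) \<le> c"
proof -
  have "length xs \<le> list_encode xs" for xs
    by (induction xs) (auto intro: le_trans[OF _ le_prod_encode_2])
  from this[of "list_decode c"] show ?thesis by simp
qed

lemma computable_code_tl_pow:
  assumes "computable_in w I" "computable_in w A"
  shows "computable_in w (\<lambda>\<rho>. (code_tl ^^ I \<rho>) (A \<rho>))"
proof -
  have "computable_in w (\<lambda>\<rho>. rec_nat (A \<rho>) (\<lambda>i acc. code_tl acc) (I \<rho>))"
    by (rule computable_rec_nat[where S="\<lambda>i acc \<rho>. code_tl acc", OF assms])
      (unfold code_tl_def, intro computable_intros computable_snd_prod_decode)
  moreover have "rec_nat c (\<lambda>i acc. code_tl acc) n = (code_tl ^^ n) c" for n c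
    by (induction n) auto
  ultimately show ?thesis by (rule computable_in_cong)
qed

lemma computable_code_nth:
  "computable_in w A \<Longrightarrow> computable_in w I \<Longrightarrow> computable_in w (\<lambda>\<rho>. code_nth (A \<rho>) (I \<rho>))"
  unfolding code_nth_def
  by (intro computable_fst_prod_decode computable_diff computable_code_tl_pow computable_const)

lemma computable_length_list_decode:
  assumes "computable_in w A"
  shows "computable_in w (\<lambda>\<rho>. length (list_decode (A \<rho>)))"
proof (rule computable_comp1[OF _ assms])
  have "computable_in w (\<lambda>\<rho>. \<Sum>i<\<rho> 0. if (code_tl ^^ i) (\<rho> 0) = 0 then 0 else 1)"
    by (intro computable_intros computable_code_tl_pow)
  moreover have "(\<Sum>i<c. if (code_tl ^^ i) c = 0 then 0 else 1) = length (list_decode c)" for c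
  proof -
    have "(\<Sum>i<c. if (code_tl ^^ i) c = 0 then 0 else 1) = card ({..<c} \<inter> {..<length (list_decode c)})"
      by (simp add: sum.If_cases code_tl_pow_eq_0_iff not_le Int_def)
    also have "{..<c} \<inter> {..<length (list_decode c)} = {..<length (list_decode c)}"
      using length_list_decode_le[of c] by auto
    finally show ?thesis by simp
  qed
  ultimately show "computable_in w (\<lambda>\<rho>. length (list_decode (\<rho> 0)))"
    by (rule computable_in_cong)
qed

lemma list_encode_map_upt_rec_nat:
  "list_encode (map L [i..<j]) = rec_nat 0 (\<lambda>m acc. Suc (prod_encode (L (j - Suc m), acc))) (j - i)"
proof -
  have "m \<le> j \<Longrightarrow> rec_nat 0 (\<lambda>m acc. Suc (prod_encode (L (j - Suc m), acc))) m
                   = list_encode (map L [j - m..<j])" for m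
  proof (induction m)
    case (Suc m)
    then have "[j - Suc m..<j] = (j - Suc m) # [j - m..<j]"
      using upt_conv_Cons[of "j - Suc m" j] by (simp add: Suc_diff_Suc)
    with Suc show ?case by simp
  qed simp
  from this[of "j - i"] show ?thesis by (cases "i \<le> j") simp_all
qed

lemma computable_list_encode_map_upt:
  assumes "computable_in w I" "computable_in w J"
    and "computable_in w (\<lambda>\<rho>. F (\<rho> 0) (\<lambda>j. \<rho> (Suc j)))"
  shows "computable_in w (\<lambda>\<rho>. list_encode (map (\<lambda>t. F t \<rho>) [I \<rho>..<J \<rho>]))"
proof -
  have "computable_in w (\<lambda>\<rho>. rec_nat 0 (\<lambda>m acc. Suc (prod_encode (F (J \<rho> - Suc m) \<rho>, acc)))
                                (J \<rho> - I \<rho>))"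
  proof (rule computable_rec_nat[where S="\<lambda>m acc \<rho>. Suc (prod_encode (F (J \<rho> - Suc m) \<rho>, acc))"])
    show "computable_in w (\<lambda>\<rho>. J \<rho> - I \<rho>)"
      by (rule computable_diff[OF assms(2,1)])
    show "computable_in w (\<lambda>\<rho>. 0)"
      by (rule computable_const)
    let ?outer = "\<lambda>\<rho> j. \<rho> (Suc (Suc j))"
    define G where "G = case_nat (\<lambda>\<rho>. J (?outer \<rho>) - Suc (\<rho> 0)) (\<lambda>j \<rho>. ?outer \<rho> j)"
    have "computable_in w (G j)" for j
      by (cases j) (auto simp: G_def intro!: computable_diff computable_Suc computable_var
          computable_rename[OF assms(2)])
    from computable_subst[where G=G, OF assms(3) this]
    have "computable_in w (\<lambda>\<rho>. F (J (?outer \<rho>) - Suc (\<rho> 0)) (?outer \<rho>))"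
      by (simp add: G_def)
    then show "computable_in w (\<lambda>\<rho>. Suc (prod_encode (F (J (?outer \<rho>) - Suc (\<rho> 0)) (?outer \<rho>), \<rho> 1)))"
      by (intro computable_Suc computable_prod_encode computable_var)
  qed
  moreover note list_encode_map_upt_rec_nat[symmetric]
  ultimately show ?thesis by (rule computable_in_cong)
qed

lemma computable_list_encode_pair:
  "computable_in w A \<Longrightarrow> computable_in w B \<Longrightarrow> computable_in w (\<lambda>\<rho>. list_encode [A \<rho>, B \<rho>])"
  by (simp add: computable_Suc computable_prod_encode computable_const)

lemma computable_list_encode_replicate:
  assumes "computable_in w N" "computable_in w A"
  shows "computable_in w (\<lambda>\<rho>. list_encode (replicate (N \<rho>) (A \<rho>)))"
proof -
  have "computable_in w (\<lambda>\<rho>. list_encode (map (\<lambda>t. A \<rho>) [0..<N \<rho>]))"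
    by (rule computable_list_encode_map_upt[OF computable_const assms(1)])
      (rule computable_rename[OF assms(2)])
  then show ?thesis by (simp add: map_replicate_const)
qed

lemma prod_encode_mono: "a \<le> a' \<Longrightarrow> b \<le> b' \<Longrightarrow> prod_encode (a, b) \<le> prod_encode (a', b')"
proof -
  assume "a \<le> a'" "b \<le> b'"
  then have "triangle (a + b) \<le> triangle (a' + b')"
    unfolding triangle_def by (intro div_le_mono mult_le_mono) auto
  with \<open>a \<le> a'\<close> show ?thesis by (simp add: prod_encode_def)
qed

lemma list_encode_le_replicate:
  "\<forall>x\<in>set xs. x \<le> b \<Longrightarrow> list_encode xs \<le> list_encode (replicate (length xs) b)"
  by (induction xs) (auto intro: prod_encode_mono)

section \<open>Snakes and finite snake paths\<close>

lemma finite_valued_cluster: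
  fixes f :: "nat \<Rightarrow> 'x::countable \<Rightarrow> 'v"
  assumes in_V: "\<And>N x. f N x \<in> V" and "finite V"
  obtains g where "\<And>F. finite F \<Longrightarrow> infinite {N. \<forall>x\<in>F. g x = f N x}"
proof -
  define pick where "pick S x = (SOME v. infinite {N\<in>S. f N x = v})" for S x
  have pick: "infinite {N\<in>S. f N x = pick S x}" if "infinite S" for S x
  proof -
    have "finite ((\<lambda>N. f N x) ` S)" using in_V \<open>finite V\<close> by (meson finite_subset image_subsetI)
    then have "\<exists>v. infinite {N\<in>S. f N x = v}" using pigeonhole_infinite[OF \<open>infinite S\<close>] by blast
    then show ?thesis unfolding pick_def by (rule someI_ex)
  qed
  txt \<open>\<open>T k\<close> holds the indices that agree with the cluster function on the first \<open>k\<close>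
    points of the enumeration \<open>from_nat\<close>.\<close>
  define T where "T = rec_nat UNIV (\<lambda>k S. {N\<in>S. f N (from_nat k) = pick S (from_nat k)})"
  have T_Suc: "T (Suc k) = {N\<in>T k. f N (from_nat k) = pick (T k) (from_nat k)}" for k
    by (simp add: T_def)
  have T_infinite: "infinite (T k)" for k
  proof (induction k)
    case (Suc k)
    then show ?case unfolding T_Suc by (rule pick)
  qed (simp add: T_def)
  have T_antimono: "T k' \<subseteq> T k" if "k \<le> k'" for k k'
    using that
  proof (induction k' rule: dec_induct)
    case (step k')
    then show ?case by (auto simp: T_Suc)
  qed simp
  define g where "g x = pick (T (to_nat x)) x" for x
  have "infinite {N. \<forall>x\<in>F. g x = f N x}" if "finite F" for F
  proof -
    obtain K where K: "\<forall>x\<in>F. to_nat x < K"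
      using \<open>finite F\<close> finite_nat_set_iff_bounded[of "to_nat ` F"] by auto
    have "T K \<subseteq> {N. \<forall>x\<in>F. g x = f N x}"
    proof (intro subsetI CollectI ballI)
      fix N x assume "N \<in> T K" "x \<in> F"
      then have "Suc (to_nat x) \<le> K" using K by (simp add: Suc_le_eq)
      then have "N \<in> T (Suc (to_nat x))" using T_antimono \<open>N \<in> T K\<close> by blast
      then show "g x = f N x" by (simp add: T_Suc g_def)
    qed
    then show ?thesis using T_infinite finite_subset by blast
  qed
  then show ?thesis by (rule that)
qed

context group
begin

lemma letter_val_closed:
  assumes "set gens \<subseteq> carrier G" "letter_ok gens l"
  shows "letter_val G gens l \<in> carrier G"
proof -
  have "gens ! (l div 2) \<in> carrier G"
    using assms nth_mem[of "l div 2" gens] by (auto simp: letter_ok_def)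
  then show ?thesis by (simp add: letter_val_def)
qed

lemma letter_val_in_letters:
  "letter_ok gens l \<Longrightarrow> letter_val G gens l \<in> set gens \<union> (\<lambda>x. inv x) ` set gens"
  by (auto simp: letter_val_def letter_ok_def)

lemma inv_mult_eq_one_iff: "a \<in> carrier G \<Longrightarrow> b \<in> carrier G \<Longrightarrow> inv a \<otimes> b = \<one> \<longleftrightarrow> a = b"
  by (metis inv_closed inv_equality inv_inv l_inv)

lemma word_val_upt_telescope:
  assumes "\<And>t. \<Omega> t \<in> carrier G" and "\<And>t. letter_val G gens (L t) = inv (\<Omega> t) \<otimes> \<Omega> (Suc t)"
  shows "i \<le> j \<Longrightarrow> word_val G gens (map L [i..<j]) = inv (\<Omega> i) \<otimes> \<Omega> j"
proof (induction "j - i" arbitrary: i)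
  case 0 then show ?case using assms(1) by (simp add: word_val_def)
next
  case (Suc k)
  then have "[i..<j] = i # [Suc i..<j]" and "word_val G gens (map L [Suc i..<j]) = inv (\<Omega> (Suc i)) \<otimes> \<Omega> j"
    by (simp_all add: upt_conv_Cons)
  then have "word_val G gens (map L [i..<j]) = (inv (\<Omega> i) \<otimes> \<Omega> (Suc i)) \<otimes> (inv (\<Omega> (Suc i)) \<otimes> \<Omega> j)"
    by (simp add: word_val_def assms(2))
  also have "\<dots> = inv (\<Omega> i) \<otimes> \<Omega> j"
    using assms(1) by (simp add: m_assoc[symmetric]) (simp add: m_assoc)
  finally show ?case .
qed

lemma exists_walk_with_steps:
  fixes d :: "int \<Rightarrow> 'a"
  assumes d: "\<And>x. d x \<in> carrier G"
  obtains \<omega> where "\<And>x. \<omega> x \<in> carrier G" and "\<And>x. inv (\<omega> x) \<otimes> \<omega> (x + 1) = d x"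
proof -
  define pos where "pos = rec_nat \<one> (\<lambda>k p. p \<otimes> d (int k))"
  define neg where "neg = rec_nat \<one> (\<lambda>k p. d (- int k - 1) \<otimes> p)"
  have pos_closed: "pos k \<in> carrier G" and neg_closed: "neg k \<in> carrier G" for k
    by (induction k) (simp_all add: pos_def neg_def d)
  define \<omega> where "\<omega> x = (if 0 \<le> x then pos (nat x) else inv (neg (nat (- x))))" for x
  have "\<omega> x \<in> carrier G" for x
    by (simp add: \<omega>_def pos_closed neg_closed)
  moreover have "inv (\<omega> x) \<otimes> \<omega> (x + 1) = d x" for x
  proof (cases "0 \<le> x")
    case True
    define k where "k = nat x"
    have x: "x = int k" using True by (simp add: k_def)
    have "\<omega> x = pos k" "\<omega> (x + 1) = pos k \<otimes> d x"
      using True by (simp_all add: \<omega>_def x pos_def nat_add_distrib)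
    then show ?thesis using d pos_closed by (simp add: m_assoc[symmetric])
  next
    case False
    define k where "k = nat (- x - 1)"
    have x: "x = - int k - 1" using False by (simp add: k_def)
    have "nat (- x) = Suc k" using x by simp
    then have "\<omega> x = inv (d x \<otimes> neg k)" using False by (simp add: \<omega>_def neg_def x)
    moreover have "\<omega> (x + 1) = inv (neg k)"
      using x by (cases k) (simp_all add: \<omega>_def neg_def pos_def nat_add_distrib)
    ultimately show ?thesis using d neg_closed by (simp add: m_assoc)
  qed
  ultimately show ?thesis by (rule that)
qed

lemma inj_walk_if_factors_nontrivial:
  fixes \<omega> :: "int \<Rightarrow> 'a"
  assumes closed: "\<And>x. \<omega> x \<in> carrier G"
    and step: "\<And>x. letter_val G gens (L x) = inv (\<omega> x) \<otimes> \<omega> (x + 1)"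
    and factors: "\<And>x m. 0 < m \<Longrightarrow> word_val G gens (map (\<lambda>t. L (x + int t)) [0..<m]) \<noteq> \<one>"
  shows "inj \<omega>"
proof -
  have "\<omega> x \<noteq> \<omega> y" if "x < y" for x y
  proof
    assume "\<omega> x = \<omega> y"
    define m where "m = nat (y - x)"
    have "word_val G gens (map (\<lambda>t. L (x + int t)) [0..<m]) = inv (\<omega> (x + int 0)) \<otimes> \<omega> (x + int m)"
    proof (rule word_val_upt_telescope[where \<Omega>="\<lambda>t. \<omega> (x + int t)"])
      show "letter_val G gens (L (x + int t)) = inv (\<omega> (x + int t)) \<otimes> \<omega> (x + int (Suc t))" for t
        using step[of "x + int t"] by (simp add: ac_simps)
    qed (simp_all add: closed)
    also have "\<dots> = \<one>"
      using \<open>\<omega> x = \<omega> y\<close> \<open>x < y\<close> closed by (simp add: m_def)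
    finally show False using factors[of m x] \<open>x < y\<close> by (simp add: m_def)
  qed
  then show ?thesis by (metis injI linorder_neqE)
qed

end

abbreviation edge_src :: "nat \<times> nat \<times> nat \<Rightarrow> nat" where "edge_src e \<equiv> fst e"
abbreviation edge_tgt :: "nat \<times> nat \<times> nat \<Rightarrow> nat" where "edge_tgt e \<equiv> fst (snd e)"
abbreviation edge_label :: "nat \<times> nat \<times> nat \<Rightarrow> nat" where "edge_label e \<equiv> snd (snd e)"

definition letter_edges :: "('g, 'b) monoid_scheme \<Rightarrow> 'g list \<Rightarrow> (nat \<times> nat \<times> nat) list
    \<Rightarrow> (nat \<times> nat \<times> 'g) set" where
  "letter_edges G gens E = (\<lambda>(a, a', l). (a, a', letter_val G gens l)) ` set E"

text \<open>A finite snake, described by its edges: the label word has no trivial nonempty factor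
  exactly when the walk it traces in the group is injective.\<close>
definition snake_path :: "('g, 'b) monoid_scheme \<Rightarrow> 'g list \<Rightarrow> (nat \<times> nat \<times> nat) list
    \<Rightarrow> (nat \<times> nat \<times> nat) list \<Rightarrow> bool" where
  "snake_path G gens E q \<longleftrightarrow> set q \<subseteq> set E \<and>
     (\<forall>t. Suc t < length q \<longrightarrow> edge_tgt (q ! t) = edge_src (q ! Suc t)) \<and>
     (\<forall>i j. i < j \<and> j \<le> length q \<longrightarrow>
        word_val G gens (map (\<lambda>t. edge_label (q ! t)) [i..<j]) \<noteq> \<one>\<^bsub>G\<^esub>)"

lemma snake_path_window:
  assumes q: "snake_path G gens E q" and "a + m \<le> length q"
  shows "snake_path G gens E (map (\<lambda>t. q ! (a + t)) [0..<m])"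
  unfolding snake_path_def
proof (intro conjI allI impI)
  show "set (map (\<lambda>t. q ! (a + t)) [0..<m]) \<subseteq> set E"
    using q assms(2) by (auto simp: snake_path_def)
  show "edge_tgt (map (\<lambda>t. q ! (a + t)) [0..<m] ! t) = edge_src (map (\<lambda>t. q ! (a + t)) [0..<m] ! Suc t)"
    if "Suc t < length (map (\<lambda>t. q ! (a + t)) [0..<m])" for t
    using q assms(2) that by (auto simp: snake_path_def)
  fix i j assume ij: "i < j \<and> j \<le> length (map (\<lambda>t. q ! (a + t)) [0..<m])"
  have "map (\<lambda>t. edge_label (map (\<lambda>t. q ! (a + t)) [0..<m] ! t)) [i..<j]
      = map (\<lambda>t. edge_label (q ! t)) [a + i..<a + j]"
    using ij by (intro nth_equalityI) (auto simp: add.assoc)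
  then show "word_val G gens (map (\<lambda>t. edge_label (map (\<lambda>t. q ! (a + t)) [0..<m] ! t)) [i..<j]) \<noteq> \<one>\<^bsub>G\<^esub>"
    using q assms(2) ij by (simp add: snake_path_def)
qed

lemma snake_path_of_snake:
  fixes G (structure)
  assumes "group G" and snake: "bi_infinite_snake G S A (letter_edges G gens E) \<omega> \<zeta>"
  shows "\<exists>q. length q = N \<and> snake_path G gens E q"
proof -
  interpret group G by fact
  have inj: "inj \<omega>" and \<omega>_closed: "\<And>i. \<omega> i \<in> carrier G"
    using snake by (auto simp: bi_infinite_snake_def)
  have "\<exists>e\<in>set E. edge_src e = \<zeta> i \<and> edge_tgt e = \<zeta> (i + 1) \<and>
      letter_val G gens (edge_label e) = inv (\<omega> i) \<otimes> \<omega> (i + 1)" for i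
  proof -
    have "(\<zeta> i, \<zeta> (i + 1), inv (\<omega> i) \<otimes> \<omega> (i + 1)) \<in> letter_edges G gens E"
      using snake by (simp add: bi_infinite_snake_def)
    then show ?thesis by (force simp: letter_edges_def)
  qed
  then obtain e where e: "\<And>i. e i \<in> set E" "\<And>i. edge_src (e i) = \<zeta> i"
      "\<And>i. edge_tgt (e i) = \<zeta> (i + 1)"
      "\<And>i. letter_val G gens (edge_label (e i)) = inv (\<omega> i) \<otimes> \<omega> (i + 1)"
    by metis
  define q where "q = map (\<lambda>t. e (int t)) [0..<N]"
  have word: "word_val G gens (map (\<lambda>t. edge_label (q ! t)) [i..<j]) = inv (\<omega> (int i)) \<otimes> \<omega> (int j)"
    if "i \<le> j" "j \<le> N" for i j
  proof -
    have "map (\<lambda>t. edge_label (q ! t)) [i..<j] = map (\<lambda>t. edge_label (e (int t))) [i..<j]"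
      using that by (simp add: q_def)
    also have "word_val G gens \<dots> = inv (\<omega> (int i)) \<otimes> \<omega> (int j)"
      by (rule word_val_upt_telescope[OF \<omega>_closed _ \<open>i \<le> j\<close>]) (simp add: e(4) add.commute)
    finally show ?thesis .
  qed
  have "snake_path G gens E q"
    unfolding snake_path_def
  proof (intro conjI allI impI)
    show "set q \<subseteq> set E" using e(1) by (auto simp: q_def)
    show "edge_tgt (q ! t) = edge_src (q ! Suc t)" if "Suc t < length q" for t
      using that e(2)[of "int t + 1"] e(3)[of "int t"] by (simp add: q_def add.commute)
    fix i j assume "i < j \<and> j \<le> length q"
    moreover then have "\<omega> (int i) \<noteq> \<omega> (int j)" using inj by (auto dest: injD)
    ultimately show "word_val G gens (map (\<lambda>t. edge_label (q ! t)) [i..<j]) \<noteq> \<one>"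
      using word \<omega>_closed inv_mult_eq_one_iff by (simp add: q_def)
  qed
  moreover have "length q = N" by (simp add: q_def)
  ultimately show ?thesis by blast
qed

text \<open>Compactness: centre the paths of length \<open>2N\<close> at the origin; a cluster function of
  them agrees on each finite window with arbitrarily long centred paths.\<close>
lemma bi_infinite_path_of_snake_paths:
  assumes "\<And>N. \<exists>q. length q = N \<and> snake_path G gens E q"
  obtains g :: "int \<Rightarrow> nat \<times> nat \<times> nat"
  where "\<And>x m. snake_path G gens E (map (\<lambda>t. g (x + int t)) [0..<m])"
proof -
  obtain Q where Q: "\<And>N. length (Q N) = N" "\<And>N. snake_path G gens E (Q N)"
    using assms by metis
  define f where "f N x = (if - int N \<le> x \<and> x < int N then Q (2 * N) ! nat (x + int N) else undefined)"
    for N x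
  have "f N x \<in> insert undefined (set E)" for N x
  proof (cases "- int N \<le> x \<and> x < int N")
    case True
    then have "Q (2 * N) ! nat (x + int N) \<in> set (Q (2 * N))" using Q(1) by (intro nth_mem) auto
    moreover have "set (Q (2 * N)) \<subseteq> set E" using Q(2) by (simp add: snake_path_def)
    ultimately show ?thesis using True by (auto simp: f_def)
  qed (auto simp: f_def)
  then obtain g where g: "\<And>F. finite F \<Longrightarrow> infinite {N. \<forall>x\<in>F. g x = f N x}"
    using finite_valued_cluster[of f] by blast
  have "snake_path G gens E (map (\<lambda>t. g (x + int t)) [0..<m])" for x m
  proof -
    have "infinite {N. \<forall>y\<in>(\<lambda>t. x + int t) ` {..<m}. g y = f N y}" by (rule g) simp
    then obtain N where N: "nat \<bar>x\<bar> + m \<le> N" "\<forall>y\<in>(\<lambda>t. x + int t) ` {..<m}. g y = f N y"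
      unfolding infinite_nat_iff_unbounded_le by blast
    define a where "a = nat (x + int N)"
    have "g (x + int t) = Q (2 * N) ! (a + t)" if "t < m" for t
    proof -
      have "- int N \<le> x + int t \<and> x + int t < int N" using N(1) that by linarith
      moreover have "nat (x + int t + int N) = a + t" using N(1) unfolding a_def by arith
      ultimately show ?thesis using N(2) that by (simp add: f_def)
    qed
    then have window: "map (\<lambda>t. g (x + int t)) [0..<m] = map (\<lambda>t. Q (2 * N) ! (a + t)) [0..<m]"
      by (intro map_cong) auto
    have "a + m \<le> length (Q (2 * N))" using N(1) unfolding Q(1) a_def by arith
    then show ?thesis unfolding window by (rule snake_path_window[OF Q(2)])
  qed
  then show ?thesis by (rule that)
qed

lemma snake_of_bi_infinite_path:
  fixes G (structure)
  assumes "group G" and gens: "set gens \<subseteq> carrier G"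
    and E: "\<forall>e\<in>set E. edge_src e \<in> A \<and> letter_ok gens (edge_label e)"
    and g: "\<And>x m. snake_path G gens E (map (\<lambda>t. g (x + int t)) [0..<m])"
  shows "\<exists>\<omega> \<zeta>. bi_infinite_snake G (set gens) A (letter_edges G gens E) \<omega> \<zeta>"
proof -
  interpret group G by fact
  have g_edge: "g x \<in> set E" for x
    using g[of x 1] by (simp add: snake_path_def)
  have g_chain: "edge_tgt (g x) = edge_src (g (x + 1))" for x
    using g[of x 2] by (simp add: snake_path_def)
  have g_word: "word_val G gens (map (\<lambda>t. edge_label (g (x + int t))) [0..<m]) \<noteq> \<one>"
    if "0 < m" for x m
  proof -
    have "word_val G gens (map (\<lambda>t. edge_label (map (\<lambda>t. g (x + int t)) [0..<m] ! t)) [0..<m]) \<noteq> \<one>"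
      using g[of x m] that unfolding snake_path_def by simp
    moreover have "map (\<lambda>t. edge_label (map (\<lambda>t. g (x + int t)) [0..<m] ! t)) [0..<m]
        = map (\<lambda>t. edge_label (g (x + int t))) [0..<m]"
      by simp
    ultimately show ?thesis by metis
  qed
  define d where "d x = letter_val G gens (edge_label (g x))" for x
  have d_closed: "d x \<in> carrier G" for x
    using E g_edge letter_val_closed[OF gens] by (simp add: d_def)
  obtain \<omega> where \<omega>_closed: "\<And>x. \<omega> x \<in> carrier G"
    and \<omega>_step: "\<And>x. inv (\<omega> x) \<otimes> \<omega> (x + 1) = d x"
    using exists_walk_with_steps[of d, OF d_closed] by blast
  have "inj \<omega>"
    using \<omega>_closed \<omega>_step[unfolded d_def, symmetric] g_word by (rule inj_walk_if_factors_nontrivial)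
  moreover have "(edge_src (g i), edge_src (g (i + 1)), inv (\<omega> i) \<otimes> \<omega> (i + 1)) \<in> letter_edges G gens E"
    for i
  proof -
    have "(edge_src (g i), edge_src (g (i + 1)), inv (\<omega> i) \<otimes> \<omega> (i + 1))
        = (\<lambda>(a, a', l). (a, a', letter_val G gens l)) (g i)"
      using g_chain[of i] by (simp add: \<omega>_step d_def case_prod_unfold)
    then show ?thesis using g_edge[of i] by (simp add: letter_edges_def)
  qed
  moreover have "inv (\<omega> i) \<otimes> \<omega> (i + 1) \<in> set gens \<union> (\<lambda>x. inv x) ` set gens" for i
    using E g_edge[of i] letter_val_in_letters by (simp add: \<omega>_step d_def)
  ultimately have "bi_infinite_snake G (set gens) A (letter_edges G gens E) \<omega> (\<lambda>i. edge_src (g i))"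
    using \<omega>_closed E g_edge by (simp add: bi_infinite_snake_def)
  then show ?thesis by blast
qed

theorem snake_exists_iff_snake_paths:
  assumes "group G" and "set gens \<subseteq> carrier G"
    and "\<forall>e\<in>set E. edge_src e \<in> A \<and> letter_ok gens (edge_label e)"
  shows "(\<exists>\<omega> \<zeta>. bi_infinite_snake G (set gens) A (letter_edges G gens E) \<omega> \<zeta>)
     \<longleftrightarrow> (\<forall>N. \<exists>q. length q = N \<and> snake_path G gens E q)"
proof
  assume "\<exists>\<omega> \<zeta>. bi_infinite_snake G (set gens) A (letter_edges G gens E) \<omega> \<zeta>"
  then show "\<forall>N. \<exists>q. length q = N \<and> snake_path G gens E q"
    using snake_path_of_snake[OF assms(1)] by blast
next
  assume "\<forall>N. \<exists>q. length q = N \<and> snake_path G gens E q"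
  then obtain g where "\<And>x m. snake_path G gens E (map (\<lambda>t. g (x + int t)) [0..<m])"
    using bi_infinite_path_of_snake_paths by blast
  then show "\<exists>\<omega> \<zeta>. bi_infinite_snake G (set gens) A (letter_edges G gens E) \<omega> \<zeta>"
    by (rule snake_of_bi_infinite_path[OF assms])
qed

lemma word_val_pair:
  assumes "group G" "set gens \<subseteq> carrier G" "letter_ok gens l" "letter_ok gens l'"
  shows "word_val G gens [l', l] = \<one>\<^bsub>G\<^esub> \<longleftrightarrow> letter_val G gens l' = inv\<^bsub>G\<^esub> (letter_val G gens l)"
proof -
  interpret group G by fact
  have "letter_val G gens l \<in> carrier G" "letter_val G gens l' \<in> carrier G"
    using assms letter_val_closed by auto
  then show ?thesis
    by (auto simp: word_val_def inv_equality intro: r_inv)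
qed

lemma is_tileset_graph_letter_edges_iff:
  fixes G (structure)
  assumes "group G" "set gens \<subseteq> carrier G" and E: "\<forall>e\<in>set E. letter_ok gens (edge_label e)"
  shows "is_tileset_graph G (set gens) {0..<n} (letter_edges G gens E) \<longleftrightarrow>
    (\<forall>e\<in>set E. edge_src e < n \<and> edge_tgt e < n \<and>
       (\<exists>e'\<in>set E. edge_src e' = edge_tgt e \<and> edge_tgt e' = edge_src e \<and>
          word_val G gens [edge_label e', edge_label e] = \<one>\<^bsub>G\<^esub>))"
proof -
  interpret group G by fact
  have letters: "letter_val G gens (edge_label e) \<in> set gens \<union> (\<lambda>x. inv x) ` set gens"
    if "e \<in> set E" for e
    using E that letter_val_in_letters by blast
  have reverse: "(edge_tgt e, edge_src e, inv (letter_val G gens (edge_label e))) \<in> letter_edges G gens E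
      \<longleftrightarrow> (\<exists>e'\<in>set E. edge_src e' = edge_tgt e \<and> edge_tgt e' = edge_src e \<and>
            word_val G gens [edge_label e', edge_label e] = \<one>)"
    if "e \<in> set E" for e
    using that E word_val_pair[OF assms(1,2)] by (force simp: letter_edges_def)
  show ?thesis
    unfolding is_tileset_graph_def letter_edges_def
    using letters reverse[unfolded letter_edges_def] by (fastforce simp: case_prod_unfold)
qed

section \<open>Coded tileset graphs\<close>

definition decode_edge :: "nat \<Rightarrow> nat \<times> nat \<times> nat" where
  "decode_edge e = (fst (prod_decode e), prod_decode (snd (prod_decode e)))"

definition code_edge :: "nat \<Rightarrow> nat \<Rightarrow> nat \<times> nat \<times> nat" where
  "code_edge c x = decode_edge (code_nth c (Suc x))"

lemma code_edges_eq: "code_edges c = map decode_edge (tl (list_decode c))"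
  by (simp add: code_edges_def decode_edge_def split: list.split)

lemma length_code_edges: "length (code_edges c) = length (list_decode c) - 1"
  by (simp add: code_edges_eq)

lemma code_edge_eq_nth: "x < length (code_edges c) \<Longrightarrow> code_edge c x = code_edges c ! x"
  by (simp add: code_edge_def code_edges_eq code_nth_eq_nth nth_tl)

lemma code_vertices_eq: "c \<noteq> 0 \<Longrightarrow> code_vertices c = {0..<code_nth c 0}"
  by (auto simp: code_vertices_def code_nth_eq_nth list_decode_eq_Nil_iff split: list.split)

lemma computable_length_code_edges:
  "computable_in w A \<Longrightarrow> computable_in w (\<lambda>\<rho>. length (code_edges (A \<rho>)))"
  unfolding length_code_edges by (intro computable_diff computable_length_list_decode computable_const)

lemma computable_code_edge:
  assumes "computable_in w A" "computable_in w X"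
  shows "computable_in w (\<lambda>\<rho>. edge_src (code_edge (A \<rho>) (X \<rho>)))"
    and "computable_in w (\<lambda>\<rho>. edge_tgt (code_edge (A \<rho>) (X \<rho>)))"
    and "computable_in w (\<lambda>\<rho>. edge_label (code_edge (A \<rho>) (X \<rho>)))"
  using assms unfolding code_edge_def decode_edge_def
  by (simp_all add: computable_fst_prod_decode computable_snd_prod_decode computable_code_nth computable_Suc)

definition word_oracle :: "('g, 'b) monoid_scheme \<Rightarrow> 'g list \<Rightarrow> nat \<Rightarrow> nat" where
  "word_oracle G gens n = (if n \<in> word_problem G gens then 1 else 0)"

lemma word_oracle_list_encode:
  "\<forall>l\<in>set ls. letter_ok gens l \<Longrightarrow>
    word_oracle G gens (list_encode ls) = (if word_val G gens ls = \<one>\<^bsub>G\<^esub> then 1 else 0)"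
  by (simp add: word_oracle_def word_problem_def)

text \<open>The reverse of each edge must carry the inverse letter; the oracle tests this on the
  word made of the two letters.\<close>
definition graph_code_ok :: "(nat \<Rightarrow> nat) \<Rightarrow> nat \<Rightarrow> nat \<Rightarrow> bool" where
  "graph_code_ok w k c \<longleftrightarrow> c \<noteq> 0 \<and>
     (\<forall>x<length (code_edges c). edge_label (code_edge c x) < 2 * k \<and>
        edge_src (code_edge c x) < code_nth c 0 \<and> edge_tgt (code_edge c x) < code_nth c 0 \<and>
        (\<exists>y<length (code_edges c).
           edge_src (code_edge c y) = edge_tgt (code_edge c x) \<and>
           edge_tgt (code_edge c y) = edge_src (code_edge c x) \<and>
           w (list_encode [edge_label (code_edge c y), edge_label (code_edge c x)]) = 1))"

text \<open>\<open>p\<close> codes the list of indices of the edges of a snake path of length \<open>N\<close>.\<close>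
definition snake_indices_code :: "(nat \<Rightarrow> nat) \<Rightarrow> nat \<Rightarrow> nat \<Rightarrow> nat \<Rightarrow> bool" where
  "snake_indices_code w c N p \<longleftrightarrow>
     (\<forall>i<N. code_nth p i < length (code_edges c)) \<and>
     (\<forall>i<N. Suc i < N \<longrightarrow>
        edge_tgt (code_edge c (code_nth p i)) = edge_src (code_edge c (code_nth p (Suc i)))) \<and>
     (\<forall>i<N. \<forall>j<Suc N. i < j \<longrightarrow>
        w (list_encode (map (\<lambda>t. edge_label (code_edge c (code_nth p t))) [i..<j])) = 0)"

text \<open>The search bound holds because \<open>list_encode\<close> is monotone.\<close>
definition snake_path_code :: "(nat \<Rightarrow> nat) \<Rightarrow> nat \<Rightarrow> nat \<Rightarrow> bool" where
  "snake_path_code w c N \<longleftrightarrow>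
     (\<exists>p<Suc (list_encode (replicate N (length (code_edges c)))).
        length (list_decode p) = N \<and> snake_indices_code w c N p)"

lemma decidable_graph_code_ok_snake_path_code:
  "decidable_in w (\<lambda>\<rho>. graph_code_ok w k (\<rho> 0) \<and> snake_path_code w (\<rho> 0) (\<rho> 1))"
  unfolding graph_code_ok_def snake_path_code_def snake_indices_code_def
  by (intro computable_intros computable_code_edge computable_length_code_edges computable_code_nth
      computable_list_encode_pair computable_list_encode_map_upt computable_list_encode_replicate
      computable_length_list_decode)

lemma code_graph_edges_eq: "code_graph_edges G gens c = letter_edges G gens (code_edges c)"
  by (simp add: code_graph_edges_def letter_edges_def)

lemma graph_code_ok_iff_edges:
  "graph_code_ok w k c \<longleftrightarrow> c \<noteq> 0 \<and>
     (\<forall>e\<in>set (code_edges c). edge_label e < 2 * k \<and>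
        edge_src e < code_nth c 0 \<and> edge_tgt e < code_nth c 0 \<and>
        (\<exists>e'\<in>set (code_edges c). edge_src e' = edge_tgt e \<and> edge_tgt e' = edge_src e \<and>
           w (list_encode [edge_label e', edge_label e]) = 1))"
proof -
  have "(\<forall>x<length E. P (E ! x) \<and> (\<exists>y<length E. Q (E ! y) (E ! x))) \<longleftrightarrow>
      (\<forall>e\<in>set E. P e \<and> (\<exists>e'\<in>set E. Q e' e))" for E :: "'a list" and P Q
    unfolding all_set_conv_all_nth Bex_def in_set_conv_nth by blast
  from this[of "code_edges c" "\<lambda>e. edge_label e < 2 * k \<and> edge_src e < code_nth c 0 \<and> edge_tgt e < code_nth c 0"
      "\<lambda>e' e. edge_src e' = edge_tgt e \<and> edge_tgt e' = edge_src e \<and> w (list_encode [edge_label e', edge_label e]) = 1"]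
  show ?thesis
    unfolding graph_code_ok_def by (simp add: code_edge_eq_nth cong: conj_cong)
qed

lemma graph_code_ok_iff:
  assumes "group G" and gens: "set gens \<subseteq> carrier G"
  shows "graph_code_ok (word_oracle G gens) (length gens) c \<longleftrightarrow>
     list_decode c \<noteq> [] \<and> (\<forall>(a, a', l)\<in>set (code_edges c). letter_ok gens l) \<and>
     is_tileset_graph G (set gens) (code_vertices c) (code_graph_edges G gens c)"
proof (cases "c \<noteq> 0 \<and> (\<forall>e\<in>set (code_edges c). letter_ok gens (edge_label e))")
  case True
  then have "word_oracle G gens (list_encode [edge_label e', edge_label e]) = 1
      \<longleftrightarrow> word_val G gens [edge_label e', edge_label e] = \<one>\<^bsub>G\<^esub>"
    if "e \<in> set (code_edges c)" "e' \<in> set (code_edges c)" for e e'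
    using that True by (subst word_oracle_list_encode) auto
  with True show ?thesis
    by (auto simp: graph_code_ok_iff_edges code_vertices_eq code_graph_edges_eq letter_ok_def
        list_decode_eq_Nil_iff is_tileset_graph_letter_edges_iff[OF assms] case_prod_unfold)
next
  case False
  then show ?thesis
    by (auto simp: graph_code_ok_iff_edges letter_ok_def list_decode_eq_Nil_iff case_prod_unfold)
qed

lemma snake_indices_code_iff:
  assumes letters: "\<forall>e\<in>set (code_edges c). letter_ok gens (edge_label e)"
    and len: "length (list_decode p) = N"
    and valid: "\<forall>x\<in>set (list_decode p). x < length (code_edges c)"
  shows "snake_indices_code (word_oracle G gens) c N p \<longleftrightarrow>
    snake_path G gens (code_edges c) (map ((!) (code_edges c)) (list_decode p))"
proof -
  let ?E = "code_edges c" and ?q = "map ((!) (code_edges c)) (list_decode p)"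
  have nth: "code_nth p i = list_decode p ! i" if "i < N" for i
    using code_nth_eq_nth len that by simp
  have edge: "code_edge c (code_nth p t) = ?q ! t" if "t < N" for t
    using that valid nth len by (simp add: code_edge_eq_nth)
  have "set ?q \<subseteq> set ?E" using valid by auto
  have q_letters: "letter_ok gens (edge_label (?q ! t))" if "t < N" for t
  proof -
    have "?q ! t \<in> set ?E"
      using nth_mem[of t ?q] that len \<open>set ?q \<subseteq> set ?E\<close> by auto
    then show ?thesis using letters by blast
  qed
  have oracle_iff:
    "word_oracle G gens (list_encode (map (\<lambda>t. edge_label (code_edge c (code_nth p t))) [i..<j])) = 0
      \<longleftrightarrow> word_val G gens (map (\<lambda>t. edge_label (?q ! t)) [i..<j]) \<noteq> \<one>\<^bsub>G\<^esub>"
    if "j \<le> N" for i j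
  proof -
    have map_eq: "map (\<lambda>t. edge_label (code_edge c (code_nth p t))) [i..<j]
        = map (\<lambda>t. edge_label (?q ! t)) [i..<j]"
      using that edge by simp
    have "\<forall>l\<in>set (map (\<lambda>t. edge_label (?q ! t)) [i..<j]). letter_ok gens l"
      using that q_letters by auto
    then show ?thesis unfolding map_eq by (simp add: word_oracle_list_encode)
  qed
  have "(\<forall>i<N. Suc i < N \<longrightarrow>
          edge_tgt (code_edge c (code_nth p i)) = edge_src (code_edge c (code_nth p (Suc i))))
      \<longleftrightarrow> (\<forall>t. Suc t < length ?q \<longrightarrow> edge_tgt (?q ! t) = edge_src (?q ! Suc t))"
    using edge len by auto
  moreover have "(\<forall>i<N. \<forall>j<Suc N. i < j \<longrightarrow>
      word_oracle G gens (list_encode (map (\<lambda>t. edge_label (code_edge c (code_nth p t))) [i..<j])) = 0)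
      \<longleftrightarrow> (\<forall>i j. i < j \<and> j \<le> length ?q \<longrightarrow>
             word_val G gens (map (\<lambda>t. edge_label (?q ! t)) [i..<j]) \<noteq> \<one>\<^bsub>G\<^esub>)"
    using len by (auto simp add: oracle_iff less_Suc_eq_le)
  moreover have "\<forall>i<N. code_nth p i < length ?E"
    using valid nth len by simp
  ultimately show ?thesis
    using \<open>set ?q \<subseteq> set ?E\<close> by (simp add: snake_indices_code_def snake_path_def)
qed

lemma snake_path_code_iff_indices:
  assumes letters: "\<forall>e\<in>set (code_edges c). letter_ok gens (edge_label e)"
  shows "snake_path_code (word_oracle G gens) c N \<longleftrightarrow>
    (\<exists>is. length is = N \<and> (\<forall>x\<in>set is. x < length (code_edges c)) \<and>
       snake_path G gens (code_edges c) (map ((!) (code_edges c)) is))"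
proof
  assume "snake_path_code (word_oracle G gens) c N"
  then obtain p where p: "length (list_decode p) = N" "snake_indices_code (word_oracle G gens) c N p"
    unfolding snake_path_code_def by blast
  then have "\<forall>x\<in>set (list_decode p). x < length (code_edges c)"
    by (auto simp: snake_indices_code_def in_set_conv_nth code_nth_eq_nth)
  with p snake_indices_code_iff[OF letters] show "\<exists>is. length is = N \<and>
      (\<forall>x\<in>set is. x < length (code_edges c)) \<and> snake_path G gens (code_edges c) (map ((!) (code_edges c)) is)"
    by blast
next
  assume "\<exists>is. length is = N \<and> (\<forall>x\<in>set is. x < length (code_edges c)) \<and>
    snake_path G gens (code_edges c) (map ((!) (code_edges c)) is)"
  then obtain "is" where "is": "length is = N" "\<forall>x\<in>set is. x < length (code_edges c)"
    "snake_path G gens (code_edges c) (map ((!) (code_edges c)) is)" by blast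
  then have "list_encode is < Suc (list_encode (replicate N (length (code_edges c))))"
    using list_encode_le_replicate[of "is" "length (code_edges c)"] by (simp add: less_imp_le)
  moreover have "snake_indices_code (word_oracle G gens) c N (list_encode is)"
    using "is" snake_indices_code_iff[OF letters, of "list_encode is" N G] by simp
  ultimately show "snake_path_code (word_oracle G gens) c N"
    unfolding snake_path_code_def using "is"(1) by (auto intro!: exI[of _ "list_encode is"])
qed

lemma ex_map_nth_if_set_subset:
  "set ys \<subseteq> set xs \<Longrightarrow> \<exists>is. ys = map ((!) xs) is \<and> (\<forall>i\<in>set is. i < length xs)"
proof (induction ys)
  case (Cons y ys)
  then obtain i "is" where "y = xs ! i" "i < length xs" "ys = map ((!) xs) is" "\<forall>i\<in>set is. i < length xs"
    by (auto simp: in_set_conv_nth)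
  then show ?case by (intro exI[of _ "i # is"]) auto
qed simp

lemma snake_path_code_iff:
  assumes "\<forall>e\<in>set (code_edges c). letter_ok gens (edge_label e)"
  shows "snake_path_code (word_oracle G gens) c N \<longleftrightarrow>
    (\<exists>q. length q = N \<and> snake_path G gens (code_edges c) q)"
  unfolding snake_path_code_iff_indices[OF assms]
proof
  assume "\<exists>q. length q = N \<and> snake_path G gens (code_edges c) q"
  then obtain q where q: "length q = N" "snake_path G gens (code_edges c) q" by blast
  then obtain "is" where "q = map ((!) (code_edges c)) is" "\<forall>x\<in>set is. x < length (code_edges c)"
    using ex_map_nth_if_set_subset[of q "code_edges c"] by (auto simp: snake_path_def)
  with q show "\<exists>is. length is = N \<and> (\<forall>x\<in>set is. x < length (code_edges c)) \<and>
      snake_path G gens (code_edges c) (map ((!) (code_edges c)) is)" by auto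
qed (metis length_map)

lemma snake_problem_iff:
  assumes "group G" and "set gens \<subseteq> carrier G"
  shows "c \<in> snake_problem G gens \<longleftrightarrow>
    (\<forall>N. graph_code_ok (word_oracle G gens) (length gens) c \<and> snake_path_code (word_oracle G gens) c N)"
proof (cases "graph_code_ok (word_oracle G gens) (length gens) c")
  case True
  then have wf: "list_decode c \<noteq> []" "\<forall>(a, a', l)\<in>set (code_edges c). letter_ok gens l"
    "is_tileset_graph G (set gens) (code_vertices c) (letter_edges G gens (code_edges c))"
    using graph_code_ok_iff[OF assms] by (auto simp: code_graph_edges_eq)
  then have edges_ok: "\<forall>e\<in>set (code_edges c). edge_src e \<in> code_vertices c \<and> letter_ok gens (edge_label e)"
    by (force simp: is_tileset_graph_def letter_edges_def)
  have "c \<in> snake_problem G gens \<longleftrightarrow>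
      (\<exists>\<omega> \<zeta>. bi_infinite_snake G (set gens) (code_vertices c) (letter_edges G gens (code_edges c)) \<omega> \<zeta>)"
    using wf by (simp add: snake_problem_def code_graph_edges_eq)
  also have "\<dots> \<longleftrightarrow> (\<forall>N. \<exists>q. length q = N \<and> snake_path G gens (code_edges c) q)"
    by (rule snake_exists_iff_snake_paths[OF assms edges_ok])
  also have "\<dots> \<longleftrightarrow> (\<forall>N. snake_path_code (word_oracle G gens) c N)"
    using snake_path_code_iff edges_ok by blast
  finally show ?thesis using True by simp
next
  case False
  then show ?thesis using graph_code_ok_iff[OF assms] by (auto simp: snake_problem_def)
qed

theorem corollary1:
  fixes G :: "('g, 'b) monoid_scheme" and S :: "'g set" and gens :: "'g list"
  assumes "group G"
    and "finite S" and "S \<subseteq> carrier G" and "generate G S = carrier G"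
    and "set gens = S"
    and "decidable_set (word_problem G gens)"
  shows "Pi01 (snake_problem G gens)"
proof -
  txt \<open>Finiteness of \<open>S\<close> is built into the list \<open>gens\<close>.\<close>
  have gens: "set gens \<subseteq> carrier G" using assms(3,5) by simp
  obtain fw where fw: "\<And>n. reval fw [n] (word_oracle G gens n)"
    using assms(6) unfolding decidable_set_def word_oracle_def by blast
  define R where "R = {(c, N). graph_code_ok (word_oracle G gens) (length gens) c \<and>
                               snake_path_code (word_oracle G gens) c N}"
  have "decidable_rel R"
    using decidable_rel_if_decidable_in[OF fw] decidable_graph_code_ok_snake_path_code
    by (simp add: R_def)
  moreover have "c \<in> snake_problem G gens \<longleftrightarrow> (\<forall>N. (c, N) \<in> R)" for c
    using snake_problem_iff[OF assms(1) gens] by (simp add: R_def)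
  ultimately show ?thesis unfolding Pi01_def by blast
qed

end
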